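(* Let $T$ be a tournament. For all vertices $u,v,w\in V(T)$, we have $P_2(u,v)\le P_2(u,w)+P_2(w,v)$.
   Context: A tournament is a digraph in which for every two distinct vertices exactly one of the two possible arcs between them is present. $N^+(x)$ denotes the out-neighbourhood of $x$. For vertices $u,v$ of $T$, $P_2(u,v):=|N^+(u)\setminus N^+(v)|$; for distinct $u,v$ this equals the number of directed paths of length at most $2$ (i.e. of length $1$ or $2$) from $u$ to $v$ in $T$. *)

theory Defs
  imports Main
begin

definition tournament :: "'a set \<Rightarrow> ('a \<Rightarrow> 'a \<Rightarrow> bool) \<Rightarrow> bool" where
  "tournament V A \<longleftrightarrow> finite V
     \<and> (\<forall>x y. A x y \<longrightarrow> x \<in> V \<and> y \<in> V)
     \<and> (\<forall>x. \<not> A x x)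
     \<and> (\<forall>x\<in>V. \<forall>y\<in>V. x \<noteq> y \<longrightarrow> (A x y \<longleftrightarrow> \<not> A y x))"

definition out_nbhd :: "'a set \<Rightarrow> ('a \<Rightarrow> 'a \<Rightarrow> bool) \<Rightarrow> 'a \<Rightarrow> 'a set" where
  "out_nbhd V A x = {y \<in> V. A x y}"

definition P2 :: "'a set \<Rightarrow> ('a \<Rightarrow> 'a \<Rightarrow> bool) \<Rightarrow> 'a \<Rightarrow> 'a \<Rightarrow> nat" where
  "P2 V A u v = card (out_nbhd V A u - out_nbhd V A v)"

end

theory Submission
  imports Defs
begin

(* P_2(u,v) is the size of the set difference N+(u) - N+(v), and the size of
   set differences satisfies the triangle inequality because
   A - C is contained in (A - B) \<union> (B - C). *)

lemma card_Diff_triangle: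
  assumes "finite A" and "finite B"
  shows "card (A - C) \<le> card (A - B) + card (B - C)"
proof -
  have "card (A - C) \<le> card ((A - B) \<union> (B - C))"
    using assms by (intro card_mono) auto
  also have "\<dots> \<le> card (A - B) + card (B - C)"
    by (rule card_Un_le)
  finally show ?thesis .
qed

lemma finite_out_nbhd: "finite V \<Longrightarrow> finite (out_nbhd V A x)"
  by (simp add: out_nbhd_def)

theorem proposition2p1:
  assumes "tournament V A"
    and "u \<in> V" and "v \<in> V" and "w \<in> V"
  shows "P2 V A u v \<le> P2 V A u w + P2 V A w v"
proof -
  have "finite V"
    using assms(1) by (simp add: tournament_def)
  then show ?thesis
    unfolding P2_def by (intro card_Diff_triangle finite_out_nbhd)
qed

end
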